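(* Let $A=(X,\mathcal M,S,O)$ be a no-signalling empirical theory with $X$ finite, and let $B=(\Omega,\mu,\xi)$ be a factorizable, non-contextual ontological representation of $Op(A)$. Then the family $$d^\sigma(s):=\sum_{\lambda\in\Omega}\Big(\prod_{x\in X}\xi_{\{x\}}(\lambda)(s(x))\Big)\mu_\sigma(\lambda),\qquad s\in O^X,\ \sigma\in S,$$ is a global section of $A$; in particular $A$ is sheaf-theoretically non-contextual, and the canonical ontological representation of $Op(A)$ built from a global section of $A$ realises the same operational theory as $B$, namely $\sum_t\xi^{can}_U(t)(s)\mu^{can}_\sigma(t)=\sum_{\lambda\in\Omega}\xi_U(\lambda)(s)\mu_\sigma(\lambda)$ for all $\sigma$, $U$, $s$.
   Context: Fix a finite outcome set $O$. A system type is a set $X$ of measurement labels with a measurement cover $\mathcal M$ (subsets of $X$ with union $X$, none a proper subset of another); $U\subseteq X$ is jointly measurable if $U\subseteq C$ for some $C\in\mathcal M$. $O^U$ is the set of functions $U\to O$; $e|_U$ is the marginal on $O^U$ of a distribution $e$ on $O^V$, $U\subseteq V$. A state is a family of distributions $\sigma_C$ on $O^C$ ($C\in\mathcal M$), no-signalling if $\sigma_C|_{C\cap C'}=\sigma_{C'}|_{C\cap C'}$, in which case $\sigma_U:=\sigma_C|_U$ for jointly measurable $U\subseteq C$. An empirical theory $A=(X,\mathcal M,S,O)$ has a set $S$ of states; a global section is a family $d^\sigma$ of distributions on $O^X$ with $d^\sigma|_C=\sigma_C$ for all $C,\sigma$. Statistical equivalence: $\sigma\sim\sigma'$ iff $\sigma_C=\sigma'_C\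 \forall C$; $x\sim x'$ iff $\sigma_{\{x\}}=\sigma_{\{x'\}}\ \forall\sigma$. $Op(A)$ is the operational theory with preparations $S$, measurements the nonempty jointly measurable $U\subseteq X$, outcome set $O^U$ for $U$, and $d_{\sigma,U}(s)=\sigma_U(s)$. An ontological representation of an operational theory with preparations $P$, measurements $M$, outcome sets $O^m$ and statistics $d_{p,m}$ is $(\Omega,\mu,\xi)$ with $\Omega$ countable, distributions $\mu_p$ on $\Omega$, $\xi_m(\lambda)$ on $O^m$, satisfying $\sum_\lambda\xi_m(\lambda)(k)\mu_p(\lambda)=d_{p,m}(k)$; it is non-contextual if statistically equivalent preparations ($d_{p,\cdot}=d_{p',\cdot}$) have equal $\mu$ and statistically equivalent outcomes ($d_{\cdot,m}(k)=d_{\cdot,m'}(k')$) have equal $\xi_m(\lambda)(k)=\xi_{m'}(\lambda)(k')$ for all $\lambda$. A representation of $Op(A)$ is factorizable if $\xi_U(\lambda)(s)=\prod_{x\in U}\xi_{\{x\}}(\lambda)(s(x))$. Canonical representation: for a global section $d$ with $d^\sigma(s)=0$ whenever $s(x)\ne s(x')$ for some $x\sim x'$ and $d^\sigma=d^{\sigma'}$ when $\sigma\sim\sigma'$, and $q:X\to X/{\sim}$ the quotient map, it is given by $\Omega^{can}=\{t:X/{\sim}\to O\}$ (restricted to points in some support), $\mu^{can}_\sigma(t)=d^\sigma(t\circ q)$, $\xi^{can}_U(t)(s)=1$ if $s=(t\circ q)|_U$ and $0$ otherwise. *)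

theory Defs
  imports "HOL-Analysis.Analysis"
begin

(* Measurement labels have type 'x, outcomes type 'o, states type 's,
   ontic states type 'l.  An element of O^U (a function U -> O) is an
   extensional function 'x => 'o, i.e. an element of  U ->\<^sub>E O. *)

definition distr_on :: "'a set \<Rightarrow> ('a \<Rightarrow> real) \<Rightarrow> bool" where
  "distr_on V e \<longleftrightarrow> finite V \<and> (\<forall>v\<in>V. 0 \<le> e v) \<and> sum e V = 1"

definition pt :: "'x \<Rightarrow> 'o \<Rightarrow> ('x \<Rightarrow> 'o)" where
  "pt x a = (\<lambda>y. if y = x then a else undefined)"

definition marg :: "'o set \<Rightarrow> 'x set \<Rightarrow> 'x set \<Rightarrow> (('x \<Rightarrow> 'o) \<Rightarrow> real) \<Rightarrow> ('x \<Rightarrow> 'o) \<Rightarrow> real" where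
  "marg Oc V U e t = (\<Sum>s\<in>{s \<in> V \<rightarrow>\<^sub>E Oc. restrict s U = t}. e s)"

definition jointly_measurable :: "'x set set \<Rightarrow> 'x set \<Rightarrow> bool" where
  "jointly_measurable M U \<longleftrightarrow> (\<exists>C\<in>M. U \<subseteq> C)"

(* empirical theory A = (X, M, S, O); the state sigma is given by the family
   st sigma C (C \<in> M), a distribution on O^C *)
definition empirical_theory ::
  "'x set \<Rightarrow> 'x set set \<Rightarrow> 's set \<Rightarrow> 'o set \<Rightarrow> ('s \<Rightarrow> 'x set \<Rightarrow> ('x \<Rightarrow> 'o) \<Rightarrow> real) \<Rightarrow> bool" where
  "empirical_theory X M S Oc st \<longleftrightarrow>
     finite Oc \<and>
     (\<forall>C\<in>M. C \<subseteq> X) \<and> \<Union>M = X \<and> (\<forall>C\<in>M. \<forall>C'\<in>M. \<not> C \<subset> C') \<and>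
     (\<forall>\<sigma>\<in>S. \<forall>C\<in>M. distr_on (C \<rightarrow>\<^sub>E Oc) (st \<sigma> C))"

definition no_signalling ::
  "'x set set \<Rightarrow> 's set \<Rightarrow> 'o set \<Rightarrow> ('s \<Rightarrow> 'x set \<Rightarrow> ('x \<Rightarrow> 'o) \<Rightarrow> real) \<Rightarrow> bool" where
  "no_signalling M S Oc st \<longleftrightarrow>
     (\<forall>\<sigma>\<in>S. \<forall>C\<in>M. \<forall>C'\<in>M. \<forall>t\<in>(C \<inter> C') \<rightarrow>\<^sub>E Oc.
        marg Oc C (C \<inter> C') (st \<sigma> C) t = marg Oc C' (C \<inter> C') (st \<sigma> C') t)"

(* sigma_U := sigma_C|_U for a (chosen) context C \<supseteq> U; well defined under no-signalling *)
definition state_on ::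
  "'x set set \<Rightarrow> 'o set \<Rightarrow> ('s \<Rightarrow> 'x set \<Rightarrow> ('x \<Rightarrow> 'o) \<Rightarrow> real) \<Rightarrow> 's \<Rightarrow> 'x set \<Rightarrow> ('x \<Rightarrow> 'o) \<Rightarrow> real" where
  "state_on M Oc st \<sigma> U = marg Oc (SOME C. C \<in> M \<and> U \<subseteq> C) U (st \<sigma> (SOME C. C \<in> M \<and> U \<subseteq> C))"

definition global_section ::
  "'x set \<Rightarrow> 'x set set \<Rightarrow> 's set \<Rightarrow> 'o set \<Rightarrow> ('s \<Rightarrow> 'x set \<Rightarrow> ('x \<Rightarrow> 'o) \<Rightarrow> real)
     \<Rightarrow> ('s \<Rightarrow> ('x \<Rightarrow> 'o) \<Rightarrow> real) \<Rightarrow> bool" where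
  "global_section X M S Oc st d \<longleftrightarrow>
     (\<forall>\<sigma>\<in>S. distr_on (X \<rightarrow>\<^sub>E Oc) (d \<sigma>) \<and>
        (\<forall>C\<in>M. \<forall>t\<in>C \<rightarrow>\<^sub>E Oc. marg Oc X C (d \<sigma>) t = st \<sigma> C t))"

definition sheaf_noncontextual ::
  "'x set \<Rightarrow> 'x set set \<Rightarrow> 's set \<Rightarrow> 'o set \<Rightarrow> ('s \<Rightarrow> 'x set \<Rightarrow> ('x \<Rightarrow> 'o) \<Rightarrow> real) \<Rightarrow> bool" where
  "sheaf_noncontextual X M S Oc st \<longleftrightarrow> (\<exists>d. global_section X M S Oc st d)"

(* preparations P, measurements Ms, outcome sets Out m, statistics d p m k *)
definition ontological_rep ::
  "'p set \<Rightarrow> 'm set \<Rightarrow> ('m \<Rightarrow> 'k set) \<Rightarrow> ('p \<Rightarrow> 'm \<Rightarrow> 'k \<Rightarrow> real)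
     \<Rightarrow> 'l set \<Rightarrow> ('p \<Rightarrow> 'l \<Rightarrow> real) \<Rightarrow> ('m \<Rightarrow> 'l \<Rightarrow> 'k \<Rightarrow> real) \<Rightarrow> bool" where
  "ontological_rep P Ms Out d \<Omega> \<mu> \<xi> \<longleftrightarrow>
     countable \<Omega> \<and>
     (\<forall>p\<in>P. (\<forall>l\<in>\<Omega>. 0 \<le> \<mu> p l) \<and> (\<mu> p has_sum 1) \<Omega>) \<and>
     (\<forall>m\<in>Ms. \<forall>l\<in>\<Omega>. distr_on (Out m) (\<xi> m l)) \<and>
     (\<forall>p\<in>P. \<forall>m\<in>Ms. \<forall>k\<in>Out m. ((\<lambda>l. \<xi> m l k * \<mu> p l) has_sum d p m k) \<Omega>)"

definition noncontextual_rep ::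
  "'p set \<Rightarrow> 'm set \<Rightarrow> ('m \<Rightarrow> 'k set) \<Rightarrow> ('p \<Rightarrow> 'm \<Rightarrow> 'k \<Rightarrow> real)
     \<Rightarrow> 'l set \<Rightarrow> ('p \<Rightarrow> 'l \<Rightarrow> real) \<Rightarrow> ('m \<Rightarrow> 'l \<Rightarrow> 'k \<Rightarrow> real) \<Rightarrow> bool" where
  "noncontextual_rep P Ms Out d \<Omega> \<mu> \<xi> \<longleftrightarrow>
     (\<forall>p\<in>P. \<forall>p'\<in>P. (\<forall>m\<in>Ms. \<forall>k\<in>Out m. d p m k = d p' m k) \<longrightarrow> (\<forall>l\<in>\<Omega>. \<mu> p l = \<mu> p' l)) \<and>
     (\<forall>m\<in>Ms. \<forall>m'\<in>Ms. \<forall>k\<in>Out m. \<forall>k'\<in>Out m'.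
        (\<forall>p\<in>P. d p m k = d p m' k') \<longrightarrow> (\<forall>l\<in>\<Omega>. \<xi> m l k = \<xi> m' l k'))"

definition Op_meas :: "'x set set \<Rightarrow> 'x set set" where
  "Op_meas M = {U. U \<noteq> {} \<and> jointly_measurable M U}"

definition Op_out :: "'o set \<Rightarrow> 'x set \<Rightarrow> ('x \<Rightarrow> 'o) set" where
  "Op_out Oc U = U \<rightarrow>\<^sub>E Oc"

definition Op_stat ::
  "'x set set \<Rightarrow> 'o set \<Rightarrow> ('s \<Rightarrow> 'x set \<Rightarrow> ('x \<Rightarrow> 'o) \<Rightarrow> real) \<Rightarrow> 's \<Rightarrow> 'x set \<Rightarrow> ('x \<Rightarrow> 'o) \<Rightarrow> real" where
  "Op_stat M Oc st = state_on M Oc st"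

definition factorizable ::
  "'x set set \<Rightarrow> 'o set \<Rightarrow> 'l set \<Rightarrow> ('x set \<Rightarrow> 'l \<Rightarrow> ('x \<Rightarrow> 'o) \<Rightarrow> real) \<Rightarrow> bool" where
  "factorizable M Oc \<Omega> \<xi> \<longleftrightarrow>
     (\<forall>U\<in>Op_meas M. \<forall>l\<in>\<Omega>. \<forall>s\<in>U \<rightarrow>\<^sub>E Oc. \<xi> U l s = (\<Prod>x\<in>U. \<xi> {x} l (pt x (s x))))"

definition induced_section ::
  "'x set \<Rightarrow> 'l set \<Rightarrow> ('s \<Rightarrow> 'l \<Rightarrow> real) \<Rightarrow> ('x set \<Rightarrow> 'l \<Rightarrow> ('x \<Rightarrow> 'o) \<Rightarrow> real)
     \<Rightarrow> 's \<Rightarrow> ('x \<Rightarrow> 'o) \<Rightarrow> real" where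
  "induced_section X \<Omega> \<mu> \<xi> \<sigma> s = (\<Sum>\<^sub>\<infinity>l\<in>\<Omega>. (\<Prod>x\<in>X. \<xi> {x} l (pt x (s x))) * \<mu> \<sigma> l)"

definition label_equiv ::
  "'x set \<Rightarrow> 'x set set \<Rightarrow> 's set \<Rightarrow> 'o set \<Rightarrow> ('s \<Rightarrow> 'x set \<Rightarrow> ('x \<Rightarrow> 'o) \<Rightarrow> real) \<Rightarrow> ('x \<times> 'x) set" where
  "label_equiv X M S Oc st = {(x, x'). x \<in> X \<and> x' \<in> X \<and>
     (\<forall>\<sigma>\<in>S. \<forall>a\<in>Oc. state_on M Oc st \<sigma> {x} (pt x a) = state_on M Oc st \<sigma> {x'} (pt x' a))}"

definition state_equiv ::
  "'x set set \<Rightarrow> 'o set \<Rightarrow> ('s \<Rightarrow> 'x set \<Rightarrow> ('x \<Rightarrow> 'o) \<Rightarrow> real) \<Rightarrow> 's \<Rightarrow> 's \<Rightarrow> bool" where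
  "state_equiv M Oc st \<sigma> \<sigma>' \<longleftrightarrow> (\<forall>C\<in>M. \<forall>t\<in>C \<rightarrow>\<^sub>E Oc. st \<sigma> C t = st \<sigma>' C t)"

definition canonical_admissible ::
  "'x set \<Rightarrow> 'x set set \<Rightarrow> 's set \<Rightarrow> 'o set \<Rightarrow> ('s \<Rightarrow> 'x set \<Rightarrow> ('x \<Rightarrow> 'o) \<Rightarrow> real)
     \<Rightarrow> ('s \<Rightarrow> ('x \<Rightarrow> 'o) \<Rightarrow> real) \<Rightarrow> bool" where
  "canonical_admissible X M S Oc st d \<longleftrightarrow>
     (\<forall>\<sigma>\<in>S. \<forall>s\<in>X \<rightarrow>\<^sub>E Oc.
        (\<exists>(x, x')\<in>label_equiv X M S Oc st. s x \<noteq> s x') \<longrightarrow> d \<sigma> s = 0) \<and>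
     (\<forall>\<sigma>\<in>S. \<forall>\<sigma>'\<in>S. state_equiv M Oc st \<sigma> \<sigma>' \<longrightarrow> (\<forall>s\<in>X \<rightarrow>\<^sub>E Oc. d \<sigma> s = d \<sigma>' s))"

definition label_quot ::
  "'x set \<Rightarrow> 'x set set \<Rightarrow> 's set \<Rightarrow> 'o set \<Rightarrow> ('s \<Rightarrow> 'x set \<Rightarrow> ('x \<Rightarrow> 'o) \<Rightarrow> real) \<Rightarrow> 'x set set" where
  "label_quot X M S Oc st = X // label_equiv X M S Oc st"

definition qmap ::
  "'x set \<Rightarrow> 'x set set \<Rightarrow> 's set \<Rightarrow> 'o set \<Rightarrow> ('s \<Rightarrow> 'x set \<Rightarrow> ('x \<Rightarrow> 'o) \<Rightarrow> real) \<Rightarrow> 'x \<Rightarrow> 'x set" where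
  "qmap X M S Oc st x = label_equiv X M S Oc st `` {x}"

definition Omega_can ::
  "'x set \<Rightarrow> 'x set set \<Rightarrow> 's set \<Rightarrow> 'o set \<Rightarrow> ('s \<Rightarrow> 'x set \<Rightarrow> ('x \<Rightarrow> 'o) \<Rightarrow> real) \<Rightarrow> ('x set \<Rightarrow> 'o) set" where
  "Omega_can X M S Oc st = label_quot X M S Oc st \<rightarrow>\<^sub>E Oc"

definition lift_can ::
  "'x set \<Rightarrow> 'x set set \<Rightarrow> 's set \<Rightarrow> 'o set \<Rightarrow> ('s \<Rightarrow> 'x set \<Rightarrow> ('x \<Rightarrow> 'o) \<Rightarrow> real)
     \<Rightarrow> ('x set \<Rightarrow> 'o) \<Rightarrow> ('x \<Rightarrow> 'o)" where
  "lift_can X M S Oc st t = restrict (\<lambda>x. t (qmap X M S Oc st x)) X"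

definition mu_can ::
  "'x set \<Rightarrow> 'x set set \<Rightarrow> 's set \<Rightarrow> 'o set \<Rightarrow> ('s \<Rightarrow> 'x set \<Rightarrow> ('x \<Rightarrow> 'o) \<Rightarrow> real)
     \<Rightarrow> ('s \<Rightarrow> ('x \<Rightarrow> 'o) \<Rightarrow> real) \<Rightarrow> 's \<Rightarrow> ('x set \<Rightarrow> 'o) \<Rightarrow> real" where
  "mu_can X M S Oc st d \<sigma> t = d \<sigma> (lift_can X M S Oc st t)"

definition xi_can ::
  "'x set \<Rightarrow> 'x set set \<Rightarrow> 's set \<Rightarrow> 'o set \<Rightarrow> ('s \<Rightarrow> 'x set \<Rightarrow> ('x \<Rightarrow> 'o) \<Rightarrow> real)
     \<Rightarrow> 'x set \<Rightarrow> ('x set \<Rightarrow> 'o) \<Rightarrow> ('x \<Rightarrow> 'o) \<Rightarrow> real" where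
  "xi_can X M S Oc st U t s = (if s = restrict (lift_can X M S Oc st t) U then 1 else 0)"

end

theory Submission
  imports Defs
begin

text \<open>
  Under a factorizable representation every ontic state \<open>\<lambda>\<close> responds to the measurements
  independently, so it determines a product distribution on the global outcomes \<open>O\<^sup>X\<close>; its
  marginal on \<open>O\<^sup>C\<close> is the product over \<open>C\<close> alone, i.e. the response \<open>\<xi>\<^sub>C(\<lambda>)\<close>.
  Averaging over \<open>\<mu>\<^sub>\<sigma>\<close> therefore gives a distribution on \<open>O\<^sup>X\<close> whose marginals reproduce
  the empirical data.  The canonical representation built from any global section \<open>d\<close> has
  the statistics of \<open>d\<close> itself, because \<open>t \<mapsto> t \<circ> q\<close> is a bijection onto the points of \<open>O\<^sup>X\<close>
  that are constant on equivalence classes, and admissibility puts all the mass of \<open>d\<close> there.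
\<close>

lemma has_sum_sum:
  fixes f :: "'i \<Rightarrow> 'a \<Rightarrow> 'b::topological_comm_monoid_add"
  assumes "finite I" and "\<And>i. i \<in> I \<Longrightarrow> (f i has_sum s i) A"
  shows "((\<lambda>x. \<Sum>i\<in>I. f i x) has_sum (\<Sum>i\<in>I. s i)) A"
  using assms by (induction I rule: finite_induct) (auto intro: has_sum_add)

lemma distr_on_bounds:
  assumes "distr_on V e" and "v \<in> V"
  shows "0 \<le> e v" and "e v \<le> 1"
proof -
  show "0 \<le> e v" using assms by (simp add: distr_on_def)
  have "e v \<le> sum e V"
    using assms by (intro member_le_sum) (auto simp: distr_on_def)
  then show "e v \<le> 1" using assms by (simp add: distr_on_def)
qed

lemma PiE_singleton_eq_image_pt: "{x} \<rightarrow>\<^sub>E Oc = pt x ` Oc"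
proof
  show "{x} \<rightarrow>\<^sub>E Oc \<subseteq> pt x ` Oc"
  proof
    fix f assume f: "f \<in> {x} \<rightarrow>\<^sub>E Oc"
    then have "f = pt x (f x)" by (auto simp: pt_def PiE_def extensional_def)
    then show "f \<in> pt x ` Oc" using f by auto
  qed
qed (auto simp: pt_def PiE_iff extensional_def split: if_splits)

lemma inj_on_pt: "inj_on (pt x) Oc"
  by (auto simp: inj_on_def pt_def fun_eq_iff)

lemma distr_on_PiE_singleton:
  "distr_on ({x} \<rightarrow>\<^sub>E Oc) e \<longleftrightarrow> distr_on Oc (\<lambda>a. e (pt x a))"
  by (simp add: distr_on_def PiE_singleton_eq_image_pt sum.reindex[OF inj_on_pt]
      finite_image_iff[OF inj_on_pt])

subsection \<open>Marginals\<close>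

lemma marg_self:
  assumes "t \<in> C \<rightarrow>\<^sub>E Oc"
  shows "marg Oc C C e t = e t"
proof -
  have "{s \<in> C \<rightarrow>\<^sub>E Oc. restrict s C = t} = {t}" using assms by auto
  then show ?thesis by (simp add: marg_def)
qed

lemma marg_empty: "marg Oc X {} e (\<lambda>_. undefined) = sum e (X \<rightarrow>\<^sub>E Oc)"
  unfolding marg_def by (rule sum.cong) (auto simp: restrict_def)

lemma marg_cong:
  assumes "\<And>r. r \<in> C \<rightarrow>\<^sub>E Oc \<Longrightarrow> e r = e' r"
  shows "marg Oc C U e t = marg Oc C U e' t"
  unfolding marg_def using assms by (intro sum.cong) auto

lemma marg_marg:
  assumes "U \<subseteq> C" "C \<subseteq> X" "finite X" "finite Oc"
  shows "marg Oc C U (marg Oc X C e) t = marg Oc X U e t"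
proof -
  let ?S = "{s \<in> X \<rightarrow>\<^sub>E Oc. restrict s U = t}"
  let ?T = "{r \<in> C \<rightarrow>\<^sub>E Oc. restrict r U = t}"
  have fibre: "{s \<in> X \<rightarrow>\<^sub>E Oc. restrict s U = t \<and> restrict s C = r} = {s \<in> X \<rightarrow>\<^sub>E Oc. restrict s C = r}"
    if "r \<in> ?T" for r
    using that \<open>U \<subseteq> C\<close> by (auto simp: fun_eq_iff restrict_def) (metis subsetD)+
  have "finite ?S" "finite ?T"
    using assms by (auto simp: finite_PiE finite_subset)
  have "marg Oc C U (marg Oc X C e) t = (\<Sum>r\<in>?T. sum e {s. s \<in> ?S \<and> restrict s C = r})"
    unfolding marg_def by (intro sum.cong refl) (simp add: fibre)
  also have "\<dots> = marg Oc X U e t"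
    unfolding marg_def using assms \<open>finite ?S\<close> \<open>finite ?T\<close>
    by (intro sum.group) (auto simp: restrict_def fun_eq_iff PiE_def Pi_def extensional_def)
  finally show ?thesis .
qed

lemma restrict_fibre_eq_PiE:
  assumes "C \<subseteq> X" "t \<in> C \<rightarrow>\<^sub>E Oc"
  shows "{s \<in> X \<rightarrow>\<^sub>E Oc. restrict s C = t} = (\<Pi>\<^sub>E x\<in>X. if x \<in> C then {t x} else Oc)"
proof (intro set_eqI iffI)
  fix s assume "s \<in> {s \<in> X \<rightarrow>\<^sub>E Oc. restrict s C = t}"
  then show "s \<in> (\<Pi>\<^sub>E x\<in>X. if x \<in> C then {t x} else Oc)"
    by (auto simp: PiE_def fun_eq_iff restrict_def split: if_splits)
next
  fix s assume s: "s \<in> (\<Pi>\<^sub>E x\<in>X. if x \<in> C then {t x} else Oc)"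
  then have "restrict s C = t"
    using assms by (auto simp: fun_eq_iff PiE_def Pi_def extensional_def)
  moreover have "s \<in> X \<rightarrow>\<^sub>E Oc"
    using s assms by (auto simp: PiE_def Pi_def split: if_splits)
  ultimately show "s \<in> {s \<in> X \<rightarrow>\<^sub>E Oc. restrict s C = t}" by simp
qed

lemma marg_prod:
  fixes f :: "'x \<Rightarrow> 'o \<Rightarrow> real"
  assumes "finite X" "finite Oc" "C \<subseteq> X" "t \<in> C \<rightarrow>\<^sub>E Oc"
  shows "marg Oc X C (\<lambda>s. \<Prod>x\<in>X. f x (s x)) t
       = (\<Prod>x\<in>C. f x (t x)) * (\<Prod>x\<in>X - C. \<Sum>a\<in>Oc. f x a)"
proof -
  let ?B = "\<lambda>x. if x \<in> C then {t x} else Oc"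
  have "marg Oc X C (\<lambda>s. \<Prod>x\<in>X. f x (s x)) t = (\<Prod>x\<in>X. \<Sum>a\<in>?B x. f x a)"
    using assms by (simp add: marg_def restrict_fibre_eq_PiE prod_sum_PiE)
  also have "\<dots> = (\<Prod>x\<in>X - C. \<Sum>a\<in>?B x. f x a) * (\<Prod>x\<in>C. \<Sum>a\<in>?B x. f x a)"
    using assms by (simp add: prod.subset_diff)
  finally show ?thesis by (simp add: mult.commute)
qed

lemma marg_mixture_of_products:
  fixes f :: "'x \<Rightarrow> 'l \<Rightarrow> 'o \<Rightarrow> real"
  assumes "finite X" "finite Oc" "C \<subseteq> X" "t \<in> C \<rightarrow>\<^sub>E Oc"
    and f: "\<And>x l. x \<in> X \<Longrightarrow> l \<in> \<Omega> \<Longrightarrow> distr_on Oc (f x l)"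
    and \<mu>_nonneg: "\<And>l. l \<in> \<Omega> \<Longrightarrow> 0 \<le> \<mu> l" and \<mu>_summable: "\<mu> summable_on \<Omega>"
  shows "marg Oc X C (\<lambda>s. \<Sum>\<^sub>\<infinity>l\<in>\<Omega>. (\<Prod>x\<in>X. f x l (s x)) * \<mu> l) t
       = (\<Sum>\<^sub>\<infinity>l\<in>\<Omega>. (\<Prod>x\<in>C. f x l (t x)) * \<mu> l)"
proof -
  let ?F = "\<lambda>s l. (\<Prod>x\<in>X. f x l (s x)) * \<mu> l"
  let ?fibre = "{s \<in> X \<rightarrow>\<^sub>E Oc. restrict s C = t}"
  have summable: "?F s summable_on \<Omega>" if "s \<in> X \<rightarrow>\<^sub>E Oc" for s
  proof (rule summable_on_comparison_test[OF \<mu>_summable])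
    fix l assume l: "l \<in> \<Omega>"
    have "x \<in> X \<Longrightarrow> 0 \<le> f x l (s x) \<and> f x l (s x) \<le> 1" for x
      using distr_on_bounds[OF f[OF _ l]] PiE_mem[OF that] by auto
    then have "0 \<le> (\<Prod>x\<in>X. f x l (s x))" "(\<Prod>x\<in>X. f x l (s x)) \<le> 1"
      by (auto intro: prod_nonneg prod_le_1)
    then show "?F s l \<le> \<mu> l" "0 \<le> ?F s l"
      using \<mu>_nonneg[OF l] by (auto intro: mult_left_le_one_le)
  qed
  have "marg Oc X C (\<lambda>s. \<Sum>\<^sub>\<infinity>l\<in>\<Omega>. ?F s l) t = (\<Sum>s\<in>?fibre. \<Sum>\<^sub>\<infinity>l\<in>\<Omega>. ?F s l)"
    by (simp add: marg_def)
  also have "\<dots> = (\<Sum>\<^sub>\<infinity>l\<in>\<Omega>. \<Sum>s\<in>?fibre. ?F s l)"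
    using assms summable by (intro infsumI[symmetric] has_sum_sum) (auto simp: finite_PiE)
  also have "\<dots> = (\<Sum>\<^sub>\<infinity>l\<in>\<Omega>. (\<Prod>x\<in>C. f x l (t x)) * \<mu> l)"
  proof (rule infsum_cong)
    fix l assume l: "l \<in> \<Omega>"
    have "(\<Prod>x\<in>X - C. \<Sum>a\<in>Oc. f x l a) = 1"
      using f l by (intro prod.neutral) (auto simp: distr_on_def)
    then have "(\<Sum>s\<in>?fibre. \<Prod>x\<in>X. f x l (s x)) = (\<Prod>x\<in>C. f x l (t x))"
      using marg_prod[OF assms(1-4), of "\<lambda>x. f x l"] by (simp add: marg_def)
    then show "(\<Sum>s\<in>?fibre. ?F s l) = (\<Prod>x\<in>C. f x l (t x)) * \<mu> l"
      by (simp add: sum_distrib_right[symmetric])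
  qed
  finally show ?thesis .
qed

lemma empirical_theoryD:
  assumes "empirical_theory X M S Oc st"
  shows "finite Oc" and "\<And>C. C \<in> M \<Longrightarrow> C \<subseteq> X" and "\<Union>M = X"
    and "\<And>C C'. C \<in> M \<Longrightarrow> C' \<in> M \<Longrightarrow> \<not> C \<subset> C'"
    and "\<And>\<sigma> C. \<sigma> \<in> S \<Longrightarrow> C \<in> M \<Longrightarrow> distr_on (C \<rightarrow>\<^sub>E Oc) (st \<sigma> C)"
  using assms by (simp_all add: empirical_theory_def)

lemma ontological_repD:
  assumes "ontological_rep P Ms Out d \<Omega> \<mu> \<xi>"
  shows "\<And>p l. p \<in> P \<Longrightarrow> l \<in> \<Omega> \<Longrightarrow> 0 \<le> \<mu> p l"
    and "\<And>p. p \<in> P \<Longrightarrow> (\<mu> p has_sum 1) \<Omega>"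
    and "\<And>m l. m \<in> Ms \<Longrightarrow> l \<in> \<Omega> \<Longrightarrow> distr_on (Out m) (\<xi> m l)"
    and "\<And>p m k. p \<in> P \<Longrightarrow> m \<in> Ms \<Longrightarrow> k \<in> Out m \<Longrightarrow>
      ((\<lambda>l. \<xi> m l k * \<mu> p l) has_sum d p m k) \<Omega>"
  using assms by (auto simp: ontological_rep_def)

lemma state_on_context:
  assumes "empirical_theory X M S Oc st" "C \<in> M" "t \<in> C \<rightarrow>\<^sub>E Oc"
  shows "state_on M Oc st \<sigma> C t = st \<sigma> C t"
proof -
  let ?C' = "SOME C'. C' \<in> M \<and> C \<subseteq> C'"
  have "?C' \<in> M \<and> C \<subseteq> ?C'" by (rule someI[of _ C]) (simp add: assms(2))
  then have "?C' = C" using empirical_theoryD(4)[OF assms(1,2)] by (metis psubsetI)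
  then show ?thesis using assms(3) by (simp add: state_on_def marg_self)
qed

lemma state_on_eq_marg_global_section:
  assumes A: "empirical_theory X M S Oc st" and "finite X"
    and d: "global_section X M S Oc st d" and "\<sigma> \<in> S" and "jointly_measurable M U"
  shows "state_on M Oc st \<sigma> U s = marg Oc X U (d \<sigma>) s"
proof -
  let ?C = "SOME C. C \<in> M \<and> U \<subseteq> C"
  have C: "?C \<in> M" "U \<subseteq> ?C"
    using \<open>jointly_measurable M U\<close> someI_ex[of "\<lambda>C. C \<in> M \<and> U \<subseteq> C"]
    by (auto simp: jointly_measurable_def)
  have "state_on M Oc st \<sigma> U s = marg Oc ?C U (st \<sigma> ?C) s" by (simp add: state_on_def)
  also have "\<dots> = marg Oc ?C U (marg Oc X ?C (d \<sigma>)) s"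
    using d \<open>\<sigma> \<in> S\<close> C(1) by (intro marg_cong) (simp add: global_section_def)
  also have "\<dots> = marg Oc X U (d \<sigma>) s"
    using C empirical_theoryD(1,2)[OF A] \<open>finite X\<close> by (intro marg_marg) auto
  finally show ?thesis .
qed

lemma ontological_rep_infsum_eq_state_on:
  assumes "ontological_rep S (Op_meas M) (Op_out Oc) (Op_stat M Oc st) \<Omega> \<mu> \<xi>"
    and "\<sigma> \<in> S" "U \<in> Op_meas M" "s \<in> U \<rightarrow>\<^sub>E Oc"
  shows "(\<Sum>\<^sub>\<infinity>l\<in>\<Omega>. \<xi> U l s * \<mu> \<sigma> l) = state_on M Oc st \<sigma> U s"
  using ontological_repD(4)[OF assms(1-3), of s] assms(4) by (simp add: Op_out_def Op_stat_def infsumI)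

lemma global_section_induced_section:
  assumes A: "empirical_theory X M S Oc st" and finX: "finite X"
    and rep: "ontological_rep S (Op_meas M) (Op_out Oc) (Op_stat M Oc st) \<Omega> \<mu> \<xi>"
    and fac: "factorizable M Oc \<Omega> \<xi>"
  shows "global_section X M S Oc st (induced_section X \<Omega> \<mu> \<xi>)"
  unfolding global_section_def
proof (intro ballI conjI)
  fix \<sigma> assume \<sigma>: "\<sigma> \<in> S"
  let ?d = "induced_section X \<Omega> \<mu> \<xi> \<sigma>"
  have finO: "finite Oc" using A by (rule empirical_theoryD)
  have \<mu>: "\<And>l. l \<in> \<Omega> \<Longrightarrow> 0 \<le> \<mu> \<sigma> l" "(\<mu> \<sigma> has_sum 1) \<Omega>"
    using ontological_repD(1,2)[OF rep \<sigma>] by auto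
  have "{x} \<in> Op_meas M" if "x \<in> X" for x
    using empirical_theoryD(3)[OF A] that by (auto simp: Op_meas_def jointly_measurable_def)
  then have \<xi>_singleton: "distr_on Oc (\<lambda>a. \<xi> {x} l (pt x a))" if "x \<in> X" "l \<in> \<Omega>" for x l
    using ontological_repD(3)[OF rep] that by (simp add: Op_out_def distr_on_PiE_singleton[symmetric])
  have marg_d: "marg Oc X C ?d t = (\<Sum>\<^sub>\<infinity>l\<in>\<Omega>. (\<Prod>x\<in>C. \<xi> {x} l (pt x (t x))) * \<mu> \<sigma> l)"
    if "C \<subseteq> X" "t \<in> C \<rightarrow>\<^sub>E Oc" for C t
    unfolding induced_section_def
    using marg_mixture_of_products[OF finX finO that, of \<Omega> "\<lambda>x l a. \<xi> {x} l (pt x a)"]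
      \<xi>_singleton \<mu> has_sum_imp_summable by blast
  show "distr_on (X \<rightarrow>\<^sub>E Oc) ?d"
    unfolding distr_on_def
  proof (intro conjI ballI)
    show "finite (X \<rightarrow>\<^sub>E Oc)" using finX finO by (simp add: finite_PiE)
    show "0 \<le> ?d s" if "s \<in> X \<rightarrow>\<^sub>E Oc" for s
      unfolding induced_section_def
    proof (intro infsum_nonneg mult_nonneg_nonneg prod_nonneg)
      fix l x assume "l \<in> \<Omega>" "x \<in> X"
      then show "0 \<le> \<xi> {x} l (pt x (s x))"
        using distr_on_bounds(1)[OF \<xi>_singleton] PiE_mem[OF that] by blast
    qed (use \<mu>(1) in blast)
    show "sum ?d (X \<rightarrow>\<^sub>E Oc) = 1"
      using marg_d[of "{}" "\<lambda>_. undefined"] \<mu>(2) by (simp add: marg_empty infsumI)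
  qed
  show "marg Oc X C ?d t = st \<sigma> C t" if C: "C \<in> M" and t: "t \<in> C \<rightarrow>\<^sub>E Oc" for C t
  proof (cases "C = {}")
    case True
    have "distr_on (C \<rightarrow>\<^sub>E Oc) (st \<sigma> C)" using \<sigma> C by (rule empirical_theoryD(5)[OF A])
    then have "st \<sigma> C t = 1" using True t by (simp add: distr_on_def)
    moreover have "marg Oc X C ?d t = 1"
      using marg_d[OF _ t] True \<mu>(2) by (simp add: infsumI)
    ultimately show ?thesis by simp
  next
    case False
    then have C_meas: "C \<in> Op_meas M" using C by (auto simp: Op_meas_def jointly_measurable_def)
    have CX: "C \<subseteq> X" using C by (rule empirical_theoryD(2)[OF A])
    have "marg Oc X C ?d t = (\<Sum>\<^sub>\<infinity>l\<in>\<Omega>. \<xi> C l t * \<mu> \<sigma> l)"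
      using fac C_meas t by (simp add: marg_d[OF CX t] factorizable_def cong: infsum_cong)
    also have "\<dots> = st \<sigma> C t"
      using ontological_rep_infsum_eq_state_on[OF rep \<sigma> C_meas t] state_on_context[OF A C t]
      by simp
    finally show ?thesis .
  qed
qed

subsection \<open>The canonical representation\<close>

lemma equiv_label_equiv: "equiv X (label_equiv X M S Oc st)"
  by (auto simp: equiv_def refl_on_def sym_def trans_def label_equiv_def)

lemma lift_can_image:
  "lift_can X M S Oc st ` Omega_can X M S Oc st
     = {s \<in> X \<rightarrow>\<^sub>E Oc. \<forall>(x, x')\<in>label_equiv X M S Oc st. s x = s x'}"
  (is "?lift ` ?\<Omega> = ?const")
proof
  let ?R = "label_equiv X M S Oc st"
  have R: "equiv X ?R" by (rule equiv_label_equiv)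
  show "?lift ` ?\<Omega> \<subseteq> ?const"
    using R
    by (auto simp: lift_can_def Omega_can_def label_quot_def qmap_def quotientI
        equiv_class_eq_iff)
  show "?const \<subseteq> ?lift ` ?\<Omega>"
  proof
    fix s assume s: "s \<in> ?const"
    define t where "t = restrict (\<lambda>c. s (SOME x. x \<in> c)) (X // ?R)"
    have rep_in_class: "(SOME y. y \<in> ?R `` {x}) \<in> ?R `` {x}" if "x \<in> X" for x
      using equiv_class_self[OF R that] by (rule someI)
    have "(SOME y. y \<in> c) \<in> X" if "c \<in> X // ?R" for c
      using that rep_in_class equiv_type[OF R] by (auto elim!: quotientE)
    then have "t \<in> ?\<Omega>"
      using s by (auto simp: t_def Omega_can_def label_quot_def)
    moreover have "?lift t = s"
    proof
      fix x show "?lift t x = s x"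
        using s rep_in_class[of x]
        by (cases "x \<in> X") (auto simp: lift_can_def t_def qmap_def quotientI PiE_def extensional_def)
    qed
    ultimately show "s \<in> ?lift ` ?\<Omega>" by blast
  qed
qed

lemma inj_on_lift_can: "inj_on (lift_can X M S Oc st) (Omega_can X M S Oc st)"
proof (rule inj_onI)
  let ?R = "label_equiv X M S Oc st"
  fix t1 t2
  assume t: "t1 \<in> Omega_can X M S Oc st" "t2 \<in> Omega_can X M S Oc st"
    and eq: "lift_can X M S Oc st t1 = lift_can X M S Oc st t2"
  show "t1 = t2"
  proof
    fix c show "t1 c = t2 c"
    proof (cases "c \<in> X // ?R")
      case True
      then obtain x where "x \<in> X" "c = ?R `` {x}" by (rule quotientE)
      then show ?thesis using fun_cong[OF eq, of x] by (simp add: lift_can_def qmap_def)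
    next
      case False
      then show ?thesis using t by (auto simp: Omega_can_def label_quot_def PiE_def extensional_def)
    qed
  qed
qed

lemma sum_canonical_eq_marg:
  assumes "finite X" "finite Oc" and adm: "canonical_admissible X M S Oc st d" and "\<sigma> \<in> S"
  shows "(\<Sum>t\<in>Omega_can X M S Oc st. xi_can X M S Oc st U t s * mu_can X M S Oc st d \<sigma> t)
       = marg Oc X U (d \<sigma>) s"
proof -
  let ?lift = "lift_can X M S Oc st"
  let ?g = "\<lambda>r. if restrict r U = s then d \<sigma> r else 0"
  have "(\<Sum>t\<in>Omega_can X M S Oc st. xi_can X M S Oc st U t s * mu_can X M S Oc st d \<sigma> t)
      = (\<Sum>t\<in>Omega_can X M S Oc st. ?g (?lift t))"
    by (intro sum.cong) (auto simp: xi_can_def mu_can_def)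
  also have "\<dots> = (\<Sum>r\<in>?lift ` Omega_can X M S Oc st. ?g r)"
    by (simp add: sum.reindex[OF inj_on_lift_can])
  also have "\<dots> = (\<Sum>r\<in>X \<rightarrow>\<^sub>E Oc. ?g r)"
  proof -
    have "d \<sigma> r = 0" if "r \<in> (X \<rightarrow>\<^sub>E Oc) - ?lift ` Omega_can X M S Oc st" for r
      using that adm \<open>\<sigma> \<in> S\<close> unfolding lift_can_image canonical_admissible_def by blast
    then show ?thesis
      using assms lift_can_image[of X M S Oc st]
      by (intro sum.mono_neutral_left) (auto simp: finite_PiE)
  qed
  also have "\<dots> = marg Oc X U (d \<sigma>) s"
    using assms by (simp add: marg_def sum.inter_filter finite_PiE)
  finally show ?thesis .
qed

theorem mainTheorem6:
  fixes X :: "'x set" and M :: "'x set set" and S :: "'s set" and Oc :: "'o set"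
    and st :: "'s \<Rightarrow> 'x set \<Rightarrow> ('x \<Rightarrow> 'o) \<Rightarrow> real"
    and \<Omega> :: "'l set" and \<mu> :: "'s \<Rightarrow> 'l \<Rightarrow> real"
    and \<xi> :: "'x set \<Rightarrow> 'l \<Rightarrow> ('x \<Rightarrow> 'o) \<Rightarrow> real"
  assumes A: "empirical_theory X M S Oc st"
    and NS: "no_signalling M S Oc st"
    and finX: "finite X"
    and rep: "ontological_rep S (Op_meas M) (Op_out Oc) (Op_stat M Oc st) \<Omega> \<mu> \<xi>"
    and nc: "noncontextual_rep S (Op_meas M) (Op_out Oc) (Op_stat M Oc st) \<Omega> \<mu> \<xi>"
    and fac: "factorizable M Oc \<Omega> \<xi>"
  shows "global_section X M S Oc st (induced_section X \<Omega> \<mu> \<xi>)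
    \<and> sheaf_noncontextual X M S Oc st
    \<and> (\<forall>d. global_section X M S Oc st d \<and> canonical_admissible X M S Oc st d \<longrightarrow>
         (\<forall>\<sigma>\<in>S. \<forall>U\<in>Op_meas M. \<forall>s\<in>Op_out Oc U.
            (\<Sum>t\<in>Omega_can X M S Oc st. xi_can X M S Oc st U t s * mu_can X M S Oc st d \<sigma> t)
            = (\<Sum>\<^sub>\<infinity>l\<in>\<Omega>. \<xi> U l s * \<mu> \<sigma> l)))"
proof -
  have G: "global_section X M S Oc st (induced_section X \<Omega> \<mu> \<xi>)"
    using A finX rep fac by (rule global_section_induced_section)
  have finO: "finite Oc" using A by (rule empirical_theoryD)
  have "(\<Sum>t\<in>Omega_can X M S Oc st. xi_can X M S Oc st U t s * mu_can X M S Oc st d \<sigma> t)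
      = (\<Sum>\<^sub>\<infinity>l\<in>\<Omega>. \<xi> U l s * \<mu> \<sigma> l)"
    if d: "global_section X M S Oc st d" and adm: "canonical_admissible X M S Oc st d"
      and \<sigma>: "\<sigma> \<in> S" and U: "U \<in> Op_meas M" and s: "s \<in> Op_out Oc U" for d \<sigma> U s
  proof -
    have "(\<Sum>t\<in>Omega_can X M S Oc st. xi_can X M S Oc st U t s * mu_can X M S Oc st d \<sigma> t)
        = marg Oc X U (d \<sigma>) s"
      using finX finO adm \<sigma> by (rule sum_canonical_eq_marg)
    also have "\<dots> = state_on M Oc st \<sigma> U s"
      using A finX d \<sigma> U by (simp add: state_on_eq_marg_global_section Op_meas_def)
    also have "\<dots> = (\<Sum>\<^sub>\<infinity>l\<in>\<Omega>. \<xi> U l s * \<mu> \<sigma> l)"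
      using rep \<sigma> U s by (simp add: ontological_rep_infsum_eq_state_on Op_out_def)
    finally show ?thesis .
  qed
  then show ?thesis using G unfolding sheaf_noncontextual_def by blast
qed

end
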